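(* Let $b,t>0$ and let $\omega_j,c_j$ ($j=1,\dots,s$) be complex numbers with $$\limsup_{n\to\infty} t^{-n}\Big|\sum_j c_j\omega_j^n\Big|\le b.$$ Then $\{1,\dots,s\}$ can be partitioned into disjoint sets $J_1,J_2$ such that $\sum_{j\in J_2}c_j\omega_j^n=0$ for all positive integers $n$, and $|\omega_j|\le t$ for each $j\in J_1$. *)

theory Defs
  imports "HOL-Analysis.Analysis"
begin

end

theory Submission
  imports Defs "HOL-Computational_Algebra.Polynomial"
begin

text \<open>
  Put the indices with \<open>|\<omega>\<^sub>j| \<le> t\<close> into \<open>J\<^sub>1\<close> and the others into \<open>J\<^sub>2\<close>. The \<open>J\<^sub>1\<close>-part is
  trivially \<open>O(t\<^sup>n)\<close>, so by the hypothesis the \<open>J\<^sub>2\<close>-part \<open>a\<^sub>n = \<Sum>\<^sub>w d\<^sub>w w\<^sup>n\<close> (grouped by distinct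
  frequencies \<open>w\<close>) is \<open>O(t\<^sup>n)\<close> as well. To isolate one frequency \<open>z\<close>, apply the recurrence
  operator of \<open>P = \<Prod>(X - w)\<close>, the product over the frequencies \<open>w \<noteq> z\<close>: \<open>\<Sum>\<^sub>i p\<^sub>i a\<^sub>n\<^sub>+\<^sub>i = P(z) d\<^sub>z z\<^sup>n\<close>, which is still \<open>O(t\<^sup>n)\<close>.
  Since \<open>|z| > t\<close> and \<open>P(z) \<noteq> 0\<close>, this forces \<open>d\<^sub>z = 0\<close>.
\<close>

lemma eventually_less_mult_of_Limsup_less:
  fixes x y :: "nat \<Rightarrow> real"
  assumes "limsup (\<lambda>n. ereal (x n / y n)) < ereal B" and "\<And>n. y n > 0"
  shows "eventually (\<lambda>n. x n < B * y n) sequentially"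
  using Limsup_lessD[OF assms(1)]
  by eventually_elim (simp add: pos_divide_less_eq[OF assms(2)])

lemma norm_sum_mult_power_le:
  fixes c \<omega> :: "'b \<Rightarrow> 'a::real_normed_div_algebra"
  assumes "\<And>j. j \<in> J \<Longrightarrow> norm (\<omega> j) \<le> t"
  shows "norm (\<Sum>j\<in>J. c j * \<omega> j ^ n) \<le> (\<Sum>j\<in>J. norm (c j)) * t ^ n"
proof -
  have "norm (\<Sum>j\<in>J. c j * \<omega> j ^ n) \<le> (\<Sum>j\<in>J. norm (c j) * t ^ n)"
    using assms by (intro order.trans[OF norm_sum] sum_mono)
      (auto simp: norm_mult norm_power intro!: mult_left_mono power_mono)
  then show ?thesis by (simp add: sum_distrib_right)
qed

lemma sum_mult_power_group_by_base:
  fixes c :: "'b \<Rightarrow> 'a::comm_semiring_1"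
  assumes "finite J"
  shows "(\<Sum>j\<in>J. c j * \<omega> j ^ n) = (\<Sum>w\<in>\<omega> ` J. (\<Sum>j | j \<in> J \<and> \<omega> j = w. c j) * w ^ n)"
proof -
  have "(\<Sum>j\<in>J. c j * \<omega> j ^ n) = (\<Sum>w\<in>\<omega> ` J. \<Sum>j | j \<in> J \<and> \<omega> j = w. c j * \<omega> j ^ n)"
    using assms by (rule sum.image_gen)
  then show ?thesis by (simp add: sum_distrib_right)
qed

lemma sum_coeff_shift_sum_mult_power:
  fixes d :: "'a \<Rightarrow> 'a::comm_semiring_1"
  shows "(\<Sum>i\<le>degree P. coeff P i * (\<Sum>w\<in>W. d w * w ^ (n + i)))
           = (\<Sum>w\<in>W. d w * w ^ n * poly P w)"
  unfolding poly_altdef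
  by (simp add: sum_distrib_left sum_distrib_right power_add mult_ac sum.swap[where A = W])

lemma eventually_norm_sum_shift_le:
  fixes a u :: "nat \<Rightarrow> 'a::real_normed_algebra"
  assumes "eventually (\<lambda>n. norm (a n) \<le> K * t ^ n) sequentially"
  shows "eventually (\<lambda>n. norm (\<Sum>i\<le>m. u i * a (n + i))
           \<le> (K * (\<Sum>i\<le>m. norm (u i) * t ^ i)) * t ^ n) sequentially"
proof -
  from assms obtain N where N: "\<And>n. n \<ge> N \<Longrightarrow> norm (a n) \<le> K * t ^ n"
    unfolding eventually_sequentially by blast
  have "norm (\<Sum>i\<le>m. u i * a (n + i)) \<le> (K * (\<Sum>i\<le>m. norm (u i) * t ^ i)) * t ^ n"
    if "n \<ge> N" for n
  proof -
    have "norm (\<Sum>i\<le>m. u i * a (n + i)) \<le> (\<Sum>i\<le>m. norm (u i) * (K * t ^ (n + i)))"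
      using N that by (intro order.trans[OF norm_sum] sum_mono order.trans[OF norm_mult_ineq]
          mult_left_mono) auto
    also have "\<dots> = (K * (\<Sum>i\<le>m. norm (u i) * t ^ i)) * t ^ n"
      by (simp add: sum_distrib_left sum_distrib_right power_add mult_ac)
    finally show ?thesis .
  qed
  then show ?thesis unfolding eventually_sequentially by blast
qed

lemma power_mult_eventually_le_imp_zero:
  fixes z q :: "'a::real_normed_div_algebra"
  assumes "0 < t" and "t < norm z"
    and "eventually (\<lambda>n. norm (z ^ n * q) \<le> M * t ^ n) sequentially"
  shows "q = 0"
proof (rule ccontr)
  assume "q \<noteq> 0"
  have "1 < norm (norm z / t)" using assms(1,2) by simp
  then have "filterlim (\<lambda>n. (norm z / t) ^ n) at_infinity sequentially"
    by (rule filterlim_realpow_sequentially_gt1)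
  then have "eventually (\<lambda>n. M / norm q < (norm z / t) ^ n) sequentially"
    using assms(1) by (simp add: filterlim_at_infinity_conv_norm_at_top filterlim_at_top_dense)
  with assms(3) have "eventually (\<lambda>_. False) sequentially"
  proof eventually_elim
    case (elim n)
    have "(norm z / t) ^ n * norm q \<le> M"
      using elim(1) assms(1) by (simp add: norm_mult norm_power power_divide field_simps)
    with elim(2) \<open>q \<noteq> 0\<close> show False by (simp add: field_simps)
  qed
  then show False by simp
qed

lemma sum_mult_power_eventually_le_imp_coeff_zero:
  fixes d :: "'a \<Rightarrow> 'a::real_normed_field"
  assumes "finite W" and "0 < t" and "\<And>w. w \<in> W \<Longrightarrow> t < norm w"
    and "eventually (\<lambda>n. norm (\<Sum>w\<in>W. d w * w ^ n) \<le> K * t ^ n) sequentially"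
    and "z \<in> W"
  shows "d z = 0"
proof -
  define P where "P = (\<Prod>w\<in>W - {z}. [:- w, 1:])"
  have "poly P z \<noteq> 0"
    unfolding P_def poly_prod using assms(1) by auto
  have "poly P w = 0" if "w \<in> W - {z}" for w
    unfolding P_def poly_prod using assms(1) that by (auto intro!: prod_zero)
  then have annihilate: "(\<Sum>i\<le>degree P. coeff P i * (\<Sum>w\<in>W. d w * w ^ (n + i)))
      = z ^ n * (poly P z * d z)" for n
    unfolding sum_coeff_shift_sum_mult_power
    using assms(1,5) by (subst sum.remove[of _ z]) (auto simp: mult_ac)
  have "eventually (\<lambda>n. norm (z ^ n * (poly P z * d z))
      \<le> (K * (\<Sum>i\<le>degree P. norm (coeff P i) * t ^ i)) * t ^ n) sequentially"
    using eventually_norm_sum_shift_le[OF assms(4), where m = "degree P" and u = "coeff P"]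
    by (simp only: annihilate)
  then have "poly P z * d z = 0"
    using assms(2,3,5) by (intro power_mult_eventually_le_imp_zero) auto
  with \<open>poly P z \<noteq> 0\<close> show ?thesis by simp
qed

lemma sum_mult_power_eventually_le_imp_zero:
  fixes c \<omega> :: "'b \<Rightarrow> 'a::real_normed_field"
  assumes "finite J" and "0 < t" and "\<And>j. j \<in> J \<Longrightarrow> t < norm (\<omega> j)"
    and "eventually (\<lambda>n. norm (\<Sum>j\<in>J. c j * \<omega> j ^ n) \<le> K * t ^ n) sequentially"
  shows "(\<Sum>j\<in>J. c j * \<omega> j ^ n) = 0"
proof -
  define d where "d w = (\<Sum>j | j \<in> J \<and> \<omega> j = w. c j)" for w
  have "d w = 0" if "w \<in> \<omega> ` J" for w
    using assms(1-3) assms(4)[unfolded sum_mult_power_group_by_base[OF assms(1)]] that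
    by (intro sum_mult_power_eventually_le_imp_coeff_zero[of "\<omega> ` J" t d K])
      (auto simp: d_def)
  then show ?thesis
    by (simp add: sum_mult_power_group_by_base[OF assms(1)] d_def)
qed

theorem lemma12p7:
  fixes b t :: real and s :: nat and \<omega> c :: "nat \<Rightarrow> complex"
  assumes "b > 0" and "t > 0"
    and "limsup (\<lambda>n. ereal (norm (\<Sum>j\<in>{1..s}. c j * \<omega> j ^ n) / t ^ n)) \<le> ereal b"
  shows "\<exists>J1 J2. J1 \<union> J2 = {1..s} \<and> J1 \<inter> J2 = {}
           \<and> (\<forall>n::nat. n \<ge> 1 \<longrightarrow> (\<Sum>j\<in>J2. c j * \<omega> j ^ n) = 0)
           \<and> (\<forall>j\<in>J1. norm (\<omega> j) \<le> t)"
proof -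
  define J1 where "J1 = {j\<in>{1..s}. norm (\<omega> j) \<le> t}"
  define J2 where "J2 = {j\<in>{1..s}. t < norm (\<omega> j)}"
  define C where "C = (\<Sum>j\<in>J1. norm (c j))"
  have partition: "J1 \<union> J2 = {1..s}" "J1 \<inter> J2 = {}"
    unfolding J1_def J2_def by auto
  have split: "(\<Sum>j\<in>{1..s}. c j * \<omega> j ^ n)
      = (\<Sum>j\<in>J1. c j * \<omega> j ^ n) + (\<Sum>j\<in>J2. c j * \<omega> j ^ n)" for n
    unfolding partition(1)[symmetric] by (rule sum.union_disjoint) (auto simp: J1_def J2_def)
  have "limsup (\<lambda>n. ereal (norm (\<Sum>j\<in>{1..s}. c j * \<omega> j ^ n) / t ^ n)) < ereal (b + 1)"
    using assms(3) by (rule order.strict_trans1) simp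
  then have "eventually (\<lambda>n. norm (\<Sum>j\<in>{1..s}. c j * \<omega> j ^ n) < (b + 1) * t ^ n) sequentially"
    by (rule eventually_less_mult_of_Limsup_less) (simp add: assms(2))
  then have J2_bounded:
    "eventually (\<lambda>n. norm (\<Sum>j\<in>J2. c j * \<omega> j ^ n) \<le> (b + 1 + C) * t ^ n) sequentially"
  proof eventually_elim
    case (elim n)
    have "norm (\<Sum>j\<in>J2. c j * \<omega> j ^ n)
        \<le> norm (\<Sum>j\<in>{1..s}. c j * \<omega> j ^ n) + norm (\<Sum>j\<in>J1. c j * \<omega> j ^ n)"
      using split[of n] by (metis add_diff_cancel_left' norm_triangle_ineq4)
    also have "\<dots> \<le> (b + 1) * t ^ n + C * t ^ n"
      using elim unfolding C_def by (intro add_mono norm_sum_mult_power_le) (auto simp: J1_def)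
    finally show ?case by (simp add: algebra_simps)
  qed
  have "(\<Sum>j\<in>J2. c j * \<omega> j ^ n) = 0" for n
    by (rule sum_mult_power_eventually_le_imp_zero[OF _ assms(2) _ J2_bounded]) (auto simp: J2_def)
  with partition show ?thesis
    unfolding J1_def by blast
qed

end
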